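(* Assume $\beta>0$, $\bar c>0$ and $0<\bar u<\bar c$, $\bar v\in\mathbb{R}$. Let $\Omega_1=(-\infty,0)\times\mathbb{R}$, $\Omega_2=(0,\infty)\times\mathbb{R}$, $\Gamma=\{x=0\}$, $\mathbf n_1=(1,0)$, $\mathbf n_2=(-1,0)$ the outward normals. Let $g$ be given and let $Q$ solve $\mathcal L\mathcal G Q=g$ in $\mathbb{R}^2$. Consider the following iteration. Choose initial values $Q^{1,0}$ on $\Omega_1$, $Q^{2,0}$ on $\Omega_2$ with $\mathcal G Q^{1,0}=\mathcal G Q^{2,0}$ on $\Gamma$; given $(Q^{1,k},Q^{2,k})$: (Correction step) with $\gamma^k=-\tfrac12\big[\mathcal A\nabla\mathcal G Q^{1,k}\cdot\mathbf n_1+\mathcal A\nabla\mathcal G Q^{2,k}\cdot\mathbf n_2\big]$ on $\Gamma$, solve $\mathcal L\mathcal G\tilde Q^{1,k}=0$ in $\Omega_1$, $(\mathcal A\nabla-\tfrac12\mathbf a)\mathcal G\tilde Q^{1,k}\cdot\mathbf n_1=\gamma^k$ on $\Gamma$; and $\mathcal L\mathcal G\tilde Q^{2,k}=0$ in $\Omega_2$, $(\mathcal A\nabla-\tfrac12\mathbf a)\mathcal G\tilde Q^{2,k}\cdot\mathbf n_2=\gamma^k$ and $\tilde Q^{2,k}=0$ on $\Gamma$. (Update step) with $\delta^k=\tfrac12\big[\mathcal G\tilde Q^{1,k}+\mathcal G\tilde Q^{2,k}\big]$ on $\Gamma$, solve $\mathcal L\mathcal G Q^{1,k+1}=g$ in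 $\Omega_1$, $\mathcal G Q^{1,k+1}=\mathcal G Q^{1,k}+\delta^k$ on $\Gamma$; and $\mathcal L\mathcal G Q^{2,k+1}=g$ in $\Omega_2$, $\mathcal G Q^{2,k+1}=\mathcal G Q^{2,k}+\delta^k$ and $Q^{2,k+1}=Q^{1,k}+\tilde Q^{1,k}$ on $\Gamma$. Then the algorithm converges in two iterations: $Q^{1,2}=Q|_{\Omega_1}$ and $Q^{2,2}=Q|_{\Omega_2}$.
   Context: $\mathcal G=\beta+\bar u\partial_x+\bar v\partial_y$ and $\mathcal L=\beta^2+2\bar u\bar v\partial_{xy}+2\beta(\bar u\partial_x+\bar v\partial_y)-(\bar c^2-\bar v^2)\partial_{yy}-(\bar c^2-\bar u^2)\partial_{xx}$, equivalently $\mathcal L=-\mathrm{div}(\mathcal A\nabla)+\mathbf a\cdot\nabla+\beta^2$ with $\mathcal A=\begin{pmatrix}\bar c^2-\bar u^2&-\bar u\bar v\\-\bar u\bar v&\bar c^2-\bar v^2\end{pmatrix}$ and $\mathbf a=2\beta(\bar u,\bar v)$. All problems (local and global) are understood in the Fourier sense in $y$: solutions are functions whose partial Fourier transform $\hat e(x,\xi)=\int_{\mathbb R}e(x,y)e^{-i\xi y}\,dy$ is, for each $\xi$, bounded in $x$ on the relevant domain (as $x\to-\infty$ in $\Omega_1$, as $x\to+\infty$ in $\Omega_2$). *)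

theory Defs
  imports "HOL-Analysis.Analysis"
begin

text \<open>Everything is formulated on the Fourier side in y: a function e(x,y) is represented
by its partial Fourier transform, a family  ehat :: real (xi) => real (x) => complex.
Then d/dy becomes multiplication by (i xi).  Functions on the closed half-lines
S1 = {..0} (closure of Omega_1) and S2 = {0..} (closure of Omega_2) are differentiated
within these sets, so that traces on Gamma = {x = 0} are one-sided values.\<close>

definition Dx :: "real set \<Rightarrow> (real \<Rightarrow> complex) \<Rightarrow> real \<Rightarrow> complex" where
  "Dx S f x = vector_derivative f (at x within S)"

definition smooth3 :: "real set \<Rightarrow> (real \<Rightarrow> complex) \<Rightarrow> bool" where
  "smooth3 S f \<longleftrightarrow> (\<forall>x\<in>S.
      (f has_vector_derivative Dx S f x) (at x within S) \<and>
      (Dx S f has_vector_derivative Dx S (Dx S f) x) (at x within S) \<and>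
      (Dx S (Dx S f) has_vector_derivative Dx S (Dx S (Dx S f)) x) (at x within S))"

text \<open>Fourier symbol of  G = beta + u d_x + v d_y.\<close>
definition Gh :: "real \<Rightarrow> real \<Rightarrow> real \<Rightarrow> real set \<Rightarrow> real \<Rightarrow> (real \<Rightarrow> complex) \<Rightarrow> real \<Rightarrow> complex" where
  "Gh \<beta> u v S \<xi> f x =
     of_real \<beta> * f x + of_real u * Dx S f x + of_real v * (\<i> * of_real \<xi>) * f x"

text \<open>Fourier symbol of
  L = beta^2 + 2 u v d_xy + 2 beta (u d_x + v d_y) - (c^2 - v^2) d_yy - (c^2 - u^2) d_xx.\<close>
definition Lh :: "real \<Rightarrow> real \<Rightarrow> real \<Rightarrow> real \<Rightarrow> real set \<Rightarrow> real \<Rightarrow> (real \<Rightarrow> complex) \<Rightarrow> real \<Rightarrow> complex" where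
  "Lh \<beta> c u v S \<xi> f x =
     of_real (\<beta>^2) * f x
     + of_real (2 * u * v) * (\<i> * of_real \<xi>) * Dx S f x
     + of_real (2 * \<beta>) * (of_real u * Dx S f x + of_real v * (\<i> * of_real \<xi>) * f x)
     - of_real (c^2 - v^2) * (\<i> * of_real \<xi>)^2 * f x
     - of_real (c^2 - u^2) * Dx S (Dx S f) x"

text \<open>Fourier side of  (A grad w) . n  with  A = [[c^2-u^2, -u v], [-u v, c^2-v^2]],
  grad = (d_x, i xi), n = (n_x, n_y).\<close>
definition conormal :: "real \<Rightarrow> real \<Rightarrow> real \<Rightarrow> real set \<Rightarrow> real \<Rightarrow> real \<times> real \<Rightarrow> (real \<Rightarrow> complex) \<Rightarrow> real \<Rightarrow> complex" where
  "conormal c u v S \<xi> n w x =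
     of_real (fst n) * (of_real (c^2 - u^2) * Dx S w x - of_real (u * v) * (\<i> * of_real \<xi>) * w x)
   + of_real (snd n) * (- of_real (u * v) * Dx S w x + of_real (c^2 - v^2) * (\<i> * of_real \<xi>) * w x)"

definition a_dot :: "real \<Rightarrow> real \<Rightarrow> real \<Rightarrow> real \<times> real \<Rightarrow> real" where
  "a_dot \<beta> u v n = 2 * \<beta> * (u * fst n + v * snd n)"

definition n1 :: "real \<times> real" where "n1 = (1, 0)"
definition n2 :: "real \<times> real" where "n2 = (-1, 0)"

end

(* Fix a frequency \<xi>; everything becomes a constant-coefficient ODE in x.  The operator L G has
   characteristic roots \<mu>p, \<mu>m, \<mu>0 with Re \<mu>p > 0 > Re \<mu>m, Re \<mu>0.  Hence a bounded error
   e = Q^{i,k} - Q of an update is a multiple of exp (\<mu>p x) on the left, and on the right G e is a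
   multiple of exp (\<mu>m x); on \<Gamma> this gives (G e)' = \<mu>p G e resp. (G e)' = \<mu>m G e.  The same
   holds for the corrections, so both Robin problems produce the same trace, the flux jump of the
   iterates divided by -2\<sigma>, where 2\<sigma> = (c^2 - u^2)(\<mu>p - \<mu>m).  Consequently the traces of
   G Q^{1,k} and G Q^{2,k} agree for all k; from k = 1 on the flux jump is 2\<sigma> times their common
   error, so the update makes both G-traces exact at k = 2.  On the left an exact G-trace kills the
   only mode.  On the right the transmission condition Q^{2,k+1} = Q^{1,k} + Qt^{1,k} gives e(0) = 0,
   the exact G-trace gives e'(0) = 0, and (D - \<mu>m)(D - \<mu>0) e = 0 forces e = 0. *)

theory Submission
  imports Defs
begin

section \<open>Constant-coefficient linear ODEs on half-lines\<close>

lemma at_within_interval_nontrivial: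
  fixes S :: "real set"
  assumes "is_interval S" "x \<in> S" "y \<in> S" "y \<noteq> x"
  shows "at x within S \<noteq> bot"
proof -
  have "x islimpt S"
    using assms by (intro connected_imp_perfect) (auto simp: is_interval_connected)
  then show ?thesis
    by (simp add: trivial_limit_within)
qed

lemma at_within_Iic_nontrivial: "x \<in> {..0::real} \<Longrightarrow> at x within {..0} \<noteq> bot"
  by (rule at_within_interval_nontrivial[of _ _ "x - 1"]) auto

lemma at_within_Ici_nontrivial: "x \<in> {0::real..} \<Longrightarrow> at x within {0..} \<noteq> bot"
  by (rule at_within_interval_nontrivial[of _ _ "x + 1"]) auto

lemma has_vector_derivative_cexp:
  "((\<lambda>x::real. exp ((\<mu>::complex) * of_real x)) has_vector_derivative \<mu> * exp (\<mu> * of_real x)) (at x within S)"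
proof -
  have "((\<lambda>z. exp (\<mu> * z)) has_field_derivative \<mu> * exp (\<mu> * of_real x)) (at (of_real x))"
    by (auto intro!: derivative_eq_intros)
  then show ?thesis
    using has_vector_derivative_real_field by fastforce
qed

lemma linear_ode_solution:
  fixes y y' :: "real \<Rightarrow> complex"
  assumes "convex S" "0 \<in> S" "x \<in> S"
    and y': "\<And>x. x \<in> S \<Longrightarrow> (y has_vector_derivative y' x) (at x within S)"
    and ode: "\<And>x. x \<in> S \<Longrightarrow> x \<noteq> 0 \<Longrightarrow> y' x = \<mu> * y x"
  shows "y x = y 0 * exp (\<mu> * of_real x)"
proof -
  define \<phi> where "\<phi> x = y x * exp (- \<mu> * of_real x)" for x
  have \<phi>': "(\<phi> has_vector_derivative (y' x - \<mu> * y x) * exp (- \<mu> * of_real x)) (at x within S)"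
    if "x \<in> S" for x
  proof -
    have "(\<phi> has_vector_derivative y x * (- \<mu> * exp (- \<mu> * of_real x)) + y' x * exp (- \<mu> * of_real x)) (at x within S)"
      unfolding \<phi>_def by (rule has_vector_derivative_mult[OF y'[OF that] has_vector_derivative_cexp])
    then show ?thesis
      by (simp add: algebra_simps)
  qed
  have cont: "continuous_on S \<phi>"
    unfolding continuous_on_eq_continuous_within using \<phi>' has_vector_derivative_continuous by blast
  have const: "(\<phi> has_derivative (\<lambda>h. 0)) (at x within S)" if "x \<in> S - {0}" for x
    using \<phi>'[of x] ode[of x] that by (simp add: has_vector_derivative_def)
  have "\<phi> x = \<phi> 0"
    by (rule has_derivative_zero_unique_strong_convex[OF assms(1) _ cont assms(2) refl const assms(3), where K="{0}"]) auto
  then show ?thesis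
    by (simp add: \<phi>_def exp_minus field_simps)
qed

lemma bounded_left_cexp_imp_zero:
  fixes K a :: complex
  assumes bound: "\<And>x. x \<le> 0 \<Longrightarrow> norm (K * exp (a * of_real x)) \<le> M" and a: "Re a < 0"
  shows "K = 0"
proof (rule ccontr)
  assume "K \<noteq> 0"
  have linear_bound: "norm K * (1 + Re a * x) \<le> M" if "x \<le> 0" for x
  proof -
    have "norm K * (1 + Re a * x) \<le> norm K * exp (Re a * x)"
      by (simp add: mult_left_mono)
    also have "\<dots> = norm (K * exp (a * of_real x))"
      by (simp add: norm_mult)
    finally show ?thesis
      using bound[OF that] by linarith
  qed
  have "0 \<le> M"
    using bound[of 0] norm_ge_zero[of K] by (simp del: norm_ge_zero)
  then have "norm K * (1 + Re a * (M / (norm K * Re a))) \<le> M"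
    using a \<open>K \<noteq> 0\<close> by (intro linear_bound) (simp add: divide_nonneg_neg mult_pos_neg)
  moreover have "norm K * (1 + Re a * (M / (norm K * Re a))) = norm K + M"
    using \<open>K \<noteq> 0\<close> a by (simp add: field_simps)
  ultimately show False
    using \<open>K \<noteq> 0\<close> by simp
qed

lemma cexp_shift_ne:
  fixes a b :: complex
  assumes "a \<noteq> b"
  obtains h :: real where "h > 0" "exp (a * of_real h) \<noteq> exp (b * of_real h)"
proof
  define h where "h = 1 / cmod (a - b)"
  show "h > 0"
    using assms by (simp add: h_def)
  have "(a - b) * of_real h \<in> ball 0 pi" "0 \<in> ball 0 pi"
    using assms pi_gt3 by (auto simp: h_def norm_mult norm_divide)
  moreover have "(a - b) * of_real h \<noteq> 0"
    using assms \<open>h > 0\<close> by simp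
  ultimately have "exp ((a - b) * of_real h) \<noteq> exp 0"
    using inj_on_exp_pi[of 0] by (meson inj_on_contraD)
  then show "exp (a * of_real h) \<noteq> exp (b * of_real h)"
    by (simp add: left_diff_distrib exp_diff)
qed

lemma bounded_left_two_cexp_imp_zero:
  fixes A B a b :: complex
  assumes bound: "\<And>x. x \<le> 0 \<Longrightarrow> norm (A * exp (a * of_real x) + B * exp (b * of_real x)) \<le> M"
    and a: "Re a < 0" and b: "Re b < 0" and "a \<noteq> b"
  shows "A = 0 \<and> B = 0"
proof -
  let ?f = "\<lambda>x. A * exp (a * of_real x) + B * exp (b * of_real x)"
  obtain h where "h > 0" and ne: "exp (- a * of_real h) \<noteq> exp (- b * of_real h)"
    using cexp_shift_ne[of "- a" "- b"] \<open>a \<noteq> b\<close> by auto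
  \<comment> \<open>the shifted difference eliminates the \<open>b\<close>-mode\<close>
  have "norm ((A * (exp (- a * of_real h) - exp (- b * of_real h))) * exp (a * of_real x))
      \<le> M + norm (exp (- b * of_real h)) * M" if "x \<le> 0" for x
  proof -
    have "(A * (exp (- a * of_real h) - exp (- b * of_real h))) * exp (a * of_real x)
        = ?f (x - h) - exp (- b * of_real h) * ?f x"
      by (simp add: algebra_simps exp_add[symmetric] exp_diff)
    also have "norm \<dots> \<le> norm (?f (x - h)) + norm (exp (- b * of_real h)) * norm (?f x)"
      by (metis norm_mult norm_triangle_ineq4)
    also have "\<dots> \<le> M + norm (exp (- b * of_real h)) * M"
      using bound[of "x - h"] bound[of x] that \<open>h > 0\<close> by (intro add_mono mult_left_mono) auto
    finally show ?thesis .
  qed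
  then have "A * (exp (- a * of_real h) - exp (- b * of_real h)) = 0"
    by (rule bounded_left_cexp_imp_zero[OF _ a])
  then have "A = 0"
    using ne by simp
  moreover have "B = 0"
    by (rule bounded_left_cexp_imp_zero[OF _ b]) (use bound \<open>A = 0\<close> in simp)
  ultimately show ?thesis ..
qed

lemma bounded_left_linear_cexp_imp_zero:
  fixes H Z a :: complex
  assumes bound: "\<And>x. x \<le> 0 \<Longrightarrow> norm ((H + Z * of_real x) * exp (a * of_real x)) \<le> M"
    and a: "Re a < 0"
  shows "H = 0 \<and> Z = 0"
proof -
  let ?f = "\<lambda>x. (H + Z * of_real x) * exp (a * of_real x)"
  have "norm ((- Z * exp (- a)) * exp (a * of_real x)) \<le> M + norm (exp (- a)) * M" if "x \<le> 0" for x
  proof -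
    have "(- Z * exp (- a)) * exp (a * of_real x) = ?f (x - 1) - exp (- a) * ?f x"
      by (simp add: exp_diff exp_minus field_simps)
    also have "norm \<dots> \<le> norm (?f (x - 1)) + norm (exp (- a)) * norm (?f x)"
      by (metis norm_mult norm_triangle_ineq4)
    also have "\<dots> \<le> M + norm (exp (- a)) * M"
      using bound[of "x - 1"] bound[of x] that by (intro add_mono mult_left_mono) auto
    finally show ?thesis .
  qed
  then have "- Z * exp (- a) = 0"
    by (rule bounded_left_cexp_imp_zero[OF _ a])
  then have "Z = 0"
    by simp
  moreover have "H = 0"
    by (rule bounded_left_cexp_imp_zero[OF _ a]) (use bound \<open>Z = 0\<close> in simp)
  ultimately show ?thesis
    by simp
qed

definition jet2 :: "real set \<Rightarrow> (real \<Rightarrow> complex) \<Rightarrow> (real \<Rightarrow> complex) \<Rightarrow> (real \<Rightarrow> complex) \<Rightarrow> bool"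
  where "jet2 S f f1 f2 \<longleftrightarrow> (\<forall>x\<in>S.
    (f has_vector_derivative f1 x) (at x within S) \<and> (f1 has_vector_derivative f2 x) (at x within S))"

definition jet3 :: "real set \<Rightarrow> (real \<Rightarrow> complex) \<Rightarrow> (real \<Rightarrow> complex) \<Rightarrow> (real \<Rightarrow> complex) \<Rightarrow> (real \<Rightarrow> complex) \<Rightarrow> bool"
  where "jet3 S f f1 f2 f3 \<longleftrightarrow> jet2 S f f1 f2 \<and> (\<forall>x\<in>S. (f2 has_vector_derivative f3 x) (at x within S))"

lemma jet3_subset: "jet3 T f f1 f2 f3 \<Longrightarrow> S \<subseteq> T \<Longrightarrow> jet3 S f f1 f2 f3"
  unfolding jet3_def jet2_def by (auto intro: has_vector_derivative_within_subset)

lemma jet3_diff: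
  "jet3 S f f1 f2 f3 \<Longrightarrow> jet3 S g g1 g2 g3 \<Longrightarrow>
    jet3 S (\<lambda>x. f x - g x) (\<lambda>x. f1 x - g1 x) (\<lambda>x. f2 x - g2 x) (\<lambda>x. f3 x - g3 x)"
  unfolding jet3_def jet2_def by (auto intro!: has_vector_derivative_diff)

lemma jet3_imp_jet2: "jet3 S f f1 f2 f3 \<Longrightarrow> jet2 S f f1 f2"
  by (simp add: jet3_def)

lemma has_vector_derivative_vanishing_imp_zero:
  assumes "at x within S \<noteq> bot" "x \<in> S" "(f has_vector_derivative d) (at x within S)"
    and "\<And>y. y \<in> S \<Longrightarrow> f y = 0"
  shows "d = 0"
proof -
  have "((\<lambda>_. 0) has_vector_derivative d) (at x within S)"
    using has_vector_derivative_transform assms(2-4) by metis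
  then show ?thesis
    using vector_derivative_unique_within[OF assms(1) _ has_vector_derivative_const] by blast
qed

lemma second_order_ode_first_integral:
  fixes a b :: complex
  assumes S: "convex S" "0 \<in> S" "x \<in> S" and h: "jet2 S h h1 h2"
    and ode: "\<And>x. x \<in> S \<Longrightarrow> h2 x - (a + b) * h1 x + a * b * h x = 0"
  shows "h1 x - b * h x = (h1 0 - b * h 0) * exp (a * of_real x)"
proof (rule linear_ode_solution[OF S])
  fix x assume "x \<in> S"
  then show "((\<lambda>x. h1 x - b * h x) has_vector_derivative h2 x - b * h1 x) (at x within S)"
    using h unfolding jet2_def by (auto intro!: has_vector_derivative_diff has_vector_derivative_mult_right)
  show "h2 x - b * h1 x = a * (h1 x - b * h x)"
    using ode[OF \<open>x \<in> S\<close>] by (simp add: algebra_simps)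
qed

lemma second_order_ode_distinct_roots:
  fixes a b :: complex
  assumes S: "convex S" "0 \<in> S" and h: "jet2 S h h1 h2" and "a \<noteq> b"
    and ode: "\<And>x. x \<in> S \<Longrightarrow> h2 x - (a + b) * h1 x + a * b * h x = 0"
  obtains A B where "\<And>x. x \<in> S \<Longrightarrow> h x = A * exp (a * of_real x) + B * exp (b * of_real x)"
proof
  have ode': "\<And>x. x \<in> S \<Longrightarrow> h2 x - (b + a) * h1 x + b * a * h x = 0"
    using ode by (simp add: add.commute mult.commute)
  have "a - b \<noteq> 0"
    using \<open>a \<noteq> b\<close> by simp
  define A where "A = (h1 0 - b * h 0) / (a - b)"
  define B where "B = (a * h 0 - h1 0) / (a - b)"
  have A: "(a - b) * A = h1 0 - b * h 0" and B: "(a - b) * B = a * h 0 - h1 0"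
    using \<open>a - b \<noteq> 0\<close> by (simp_all add: A_def B_def)
  fix x assume "x \<in> S"
  have "(a - b) * h x = (h1 x - b * h x) - (h1 x - a * h x)"
    by (simp add: algebra_simps)
  also have "\<dots> = (h1 0 - b * h 0) * exp (a * of_real x) - (h1 0 - a * h 0) * exp (b * of_real x)"
    using second_order_ode_first_integral[OF S \<open>x \<in> S\<close> h ode]
      second_order_ode_first_integral[OF S \<open>x \<in> S\<close> h ode'] by simp
  also have "\<dots> = ((a - b) * A) * exp (a * of_real x) + ((a - b) * B) * exp (b * of_real x)"
    unfolding A B by (simp add: algebra_simps)
  also have "\<dots> = (a - b) * (A * exp (a * of_real x) + B * exp (b * of_real x))"
    by (simp add: algebra_simps)
  finally show "h x = A * exp (a * of_real x) + B * exp (b * of_real x)"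
    using \<open>a - b \<noteq> 0\<close> by simp
qed

lemma second_order_ode_double_root:
  fixes a :: complex
  assumes S: "convex S" "0 \<in> S" and h: "jet2 S h h1 h2"
    and ode: "\<And>x. x \<in> S \<Longrightarrow> h2 x - (a + a) * h1 x + a * a * h x = 0"
  obtains H Z where "\<And>x. x \<in> S \<Longrightarrow> h x = (H + Z * of_real x) * exp (a * of_real x)"
proof
  define Z where "Z = h1 0 - a * h 0"
  let ?\<psi> = "\<lambda>x. h x - Z * (of_real x * exp (a * of_real x))"
  fix x assume "x \<in> S"
  have "?\<psi> x = ?\<psi> 0 * exp (a * of_real x)"
  proof (rule linear_ode_solution[OF S \<open>x \<in> S\<close>])
    fix y assume "y \<in> S"
    have "((\<lambda>y. of_real y * exp (a * of_real y)) has_vector_derivative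
        of_real y * (a * exp (a * of_real y)) + 1 * exp (a * of_real y)) (at y within S)"
      by (intro has_vector_derivative_mult has_vector_derivative_cexp)
        (simp add: has_vector_derivative_of_real[OF DERIV_ident, simplified])
    then show "(?\<psi> has_vector_derivative
        h1 y - Z * (of_real y * (a * exp (a * of_real y)) + 1 * exp (a * of_real y))) (at y within S)"
      using h \<open>y \<in> S\<close> unfolding jet2_def by (auto intro!: has_vector_derivative_diff has_vector_derivative_mult_right)
    show "h1 y - Z * (of_real y * (a * exp (a * of_real y)) + 1 * exp (a * of_real y)) = a * ?\<psi> y"
      using second_order_ode_first_integral[OF S \<open>y \<in> S\<close> h, of a a] ode
      by (simp add: Z_def algebra_simps)
  qed
  then show "h x = (h 0 + Z * of_real x) * exp (a * of_real x)"
    by (simp add: algebra_simps)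
qed

lemma second_order_ode_bounded_left_imp_zero:
  fixes a b :: complex
  assumes h: "jet2 {..0} h h1 h2" and bounded: "bounded (h ` {..0})"
    and ode: "\<And>x. x \<in> {..0} \<Longrightarrow> h2 x - (a + b) * h1 x + a * b * h x = 0"
    and a: "Re a < 0" and b: "Re b < 0" and "x \<le> 0"
  shows "h x = 0"
proof -
  have S: "convex {..0::real}" "0 \<in> {..0::real}"
    by auto
  obtain M where M: "\<And>x. x \<le> 0 \<Longrightarrow> norm (h x) \<le> M"
    using bounded by (auto simp: bounded_iff)
  show ?thesis
  proof (cases "a = b")
    case True
    then obtain H Z where hx: "\<And>x. x \<le> 0 \<Longrightarrow> h x = (H + Z * of_real x) * exp (a * of_real x)"
      using second_order_ode_double_root[OF S h] ode True by (metis atMost_iff)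
    have "H = 0 \<and> Z = 0"
      by (rule bounded_left_linear_cexp_imp_zero[OF _ a, where M = M]) (metis M hx)
    then show ?thesis
      using hx \<open>x \<le> 0\<close> by simp
  next
    case False
    then obtain A B where hx: "\<And>x. x \<le> 0 \<Longrightarrow> h x = A * exp (a * of_real x) + B * exp (b * of_real x)"
      using second_order_ode_distinct_roots[OF S h False ode] by (metis atMost_iff)
    have "A = 0 \<and> B = 0"
      by (rule bounded_left_two_cexp_imp_zero[OF _ a b False, where M = M]) (metis M hx)
    then show ?thesis
      using hx \<open>x \<le> 0\<close> by simp
  qed
qed

lemma mult_exp_neg_le:
  fixes r x :: real
  assumes "r < 0" "x \<ge> 0"
  shows "x * exp (r * x) \<le> 1 / (- r)"
proof -
  have "(- r * x) * exp (r * x) \<le> exp (- r * x) * exp (r * x)"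
    using exp_ge_add_one_self[of "- r * x"] by (intro mult_right_mono) auto
  also have "\<dots> = 1"
    by (simp add: exp_minus[symmetric] exp_add[symmetric])
  finally show ?thesis
    using assms by (simp add: field_simps)
qed

lemma second_order_ode_bounded_right:
  fixes a b :: complex
  assumes h: "jet2 {0..} h h1 h2"
    and ode: "\<And>x. x \<in> {0..} \<Longrightarrow> h2 x - (a + b) * h1 x + a * b * h x = 0"
    and a: "Re a < 0" and b: "Re b < 0"
  shows "bounded (h ` {0..})"
proof -
  have S: "convex {0::real..}" "0 \<in> {0::real..}"
    by auto
  have decay: "exp (Re d * x) \<le> 1" if "Re d < 0" "x \<ge> 0" for d :: complex and x :: real
    using that by (simp add: mult_nonpos_nonneg)
  show ?thesis
  proof (cases "a = b")
    case True
    then obtain H Z where hx: "\<And>x. x \<ge> 0 \<Longrightarrow> h x = (H + Z * of_real x) * exp (a * of_real x)"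
      using second_order_ode_double_root[OF S h] ode True by (metis atLeast_iff)
    have "norm (h x) \<le> norm H + norm Z * (1 / (- Re a))" if "x \<ge> 0" for x
    proof -
      have "norm (h x) \<le> (norm H + norm Z * x) * exp (Re a * x)"
        using hx[OF that] that by (simp add: norm_mult mult_right_mono norm_triangle_le)
      also have "\<dots> = norm H * exp (Re a * x) + norm Z * (x * exp (Re a * x))"
        by (simp add: algebra_simps)
      also have "\<dots> \<le> norm H * 1 + norm Z * (1 / (- Re a))"
        using that a mult_exp_neg_le[OF a that]
        by (intro add_mono mult_left_mono) (auto simp: mult_nonpos_nonneg)
      finally show ?thesis
        by simp
    qed
    then show ?thesis
      unfolding bounded_iff by auto
  next
    case False
    then obtain A B where hx: "\<And>x. x \<ge> 0 \<Longrightarrow> h x = A * exp (a * of_real x) + B * exp (b * of_real x)"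
      using second_order_ode_distinct_roots[OF S h False ode] by (metis atLeast_iff)
    have "norm (h x) \<le> norm A + norm B" if "x \<ge> 0" for x
    proof -
      have "norm (h x) \<le> norm (A * exp (a * of_real x)) + norm (B * exp (b * of_real x))"
        using hx[OF that] norm_triangle_ineq by metis
      also have "\<dots> = norm A * exp (Re a * x) + norm B * exp (Re b * x)"
        by (simp add: norm_mult)
      also have "\<dots> \<le> norm A * 1 + norm B * 1"
        using decay[OF a that] decay[OF b that] by (intro add_mono mult_left_mono) auto
      finally show ?thesis
        by simp
    qed
    then show ?thesis
      unfolding bounded_iff by auto
  qed
qed

lemma second_order_ode_zero_initial:
  fixes a b :: complex
  assumes S: "convex S" "0 \<in> S" "x \<in> S" and f: "jet2 S f f1 f2"
    and ode: "\<And>x. x \<in> S \<Longrightarrow> f2 x - (a + b) * f1 x + a * b * f x = 0"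
    and "f 0 = 0" "f1 0 = 0"
  shows "f x = 0"
proof -
  have "f x = f 0 * exp (b * of_real x)"
  proof (rule linear_ode_solution[OF S])
    fix y assume "y \<in> S"
    then show "(f has_vector_derivative f1 y) (at y within S)"
      using f by (simp add: jet2_def)
    show "f1 y = b * f y"
      using second_order_ode_first_integral[OF S(1,2) \<open>y \<in> S\<close> f ode] \<open>f 0 = 0\<close> \<open>f1 0 = 0\<close>
      by simp
  qed
  with \<open>f 0 = 0\<close> show ?thesis
    by simp
qed

lemma third_order_ode_split:
  fixes a b c :: complex
  assumes S: "convex S" "0 \<in> S" and f: "jet3 S f f1 f2 f3" and "a \<noteq> b" "a \<noteq> c"
    and ode: "\<And>x. x \<in> S \<Longrightarrow> x \<noteq> 0 \<Longrightarrow>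
      f3 x - (a + b + c) * f2 x + (a * b + a * c + b * c) * f1 x - a * b * c * f x = 0"
  obtains K where
    "jet2 S (\<lambda>x. f x - K * exp (a * of_real x)) (\<lambda>x. f1 x - K * a * exp (a * of_real x))
       (\<lambda>x. f2 x - K * a * a * exp (a * of_real x))"
    "\<And>x. x \<in> S \<Longrightarrow> (f2 x - K * a * a * exp (a * of_real x)) - (b + c) * (f1 x - K * a * exp (a * of_real x))
       + b * c * (f x - K * exp (a * of_real x)) = 0"
proof
  have exp': "((\<lambda>x. K * exp (a * of_real x)) has_vector_derivative K * a * exp (a * of_real x)) (at x within S)"
    for K x
    using has_vector_derivative_mult_right[OF has_vector_derivative_cexp] by (simp add: mult.assoc)
  define y where "y x = f2 x - (b + c) * f1 x + b * c * f x" for x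
  define K where "K = y 0 / ((a - b) * (a - c))"
  show "jet2 S (\<lambda>x. f x - K * exp (a * of_real x)) (\<lambda>x. f1 x - K * a * exp (a * of_real x))
      (\<lambda>x. f2 x - K * a * a * exp (a * of_real x))"
    using f exp' by (auto simp: jet3_def jet2_def intro!: has_vector_derivative_diff)
  fix x assume "x \<in> S"
  \<comment> \<open>\<open>y\<close> removes the modes \<open>b\<close> and \<open>c\<close>, so it is a pure \<open>a\<close>-mode\<close>
  have "y x = y 0 * exp (a * of_real x)"
  proof (rule linear_ode_solution[OF S \<open>x \<in> S\<close>])
    fix x assume "x \<in> S"
    then show "(y has_vector_derivative f3 x - (b + c) * f2 x + b * c * f1 x) (at x within S)"
      using f unfolding y_def jet3_def jet2_def
      by (auto intro!: has_vector_derivative_diff has_vector_derivative_add has_vector_derivative_mult_right)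
    assume "x \<noteq> 0"
    with ode[OF \<open>x \<in> S\<close>] show "f3 x - (b + c) * f2 x + b * c * f1 x = a * y x"
      by (simp add: y_def algebra_simps)
  qed
  moreover have "K * ((a - b) * (a - c)) = y 0"
    using \<open>a \<noteq> b\<close> \<open>a \<noteq> c\<close> by (simp add: K_def)
  moreover have "(f2 x - K * a * a * exp (a * of_real x)) - (b + c) * (f1 x - K * a * exp (a * of_real x))
      + b * c * (f x - K * exp (a * of_real x)) = y x - K * ((a - b) * (a - c)) * exp (a * of_real x)"
    by (simp add: y_def algebra_simps)
  ultimately show "(f2 x - K * a * a * exp (a * of_real x)) - (b + c) * (f1 x - K * a * exp (a * of_real x))
      + b * c * (f x - K * exp (a * of_real x)) = 0"
    by simp
qed

lemma third_order_ode_bounded_left: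
  fixes a b c :: complex
  assumes f: "jet3 {..0} f f1 f2 f3" and bounded: "bounded (f ` {..0})"
    and ode: "\<And>x. x < 0 \<Longrightarrow>
      f3 x - (a + b + c) * f2 x + (a * b + a * c + b * c) * f1 x - a * b * c * f x = 0"
    and a: "Re a > 0" and b: "Re b < 0" and c: "Re c < 0"
  shows "\<And>x. x \<le> 0 \<Longrightarrow> f x = f 0 * exp (a * of_real x)" and "f1 0 = a * f 0" and "f2 0 = a * a * f 0"
proof -
  have S: "convex {..0::real}" "0 \<in> {..0::real}"
    by auto
  have ab: "a \<noteq> b" and ac: "a \<noteq> c"
    using a b c by auto
  have ode': "\<And>x. x \<in> {..0} \<Longrightarrow> x \<noteq> 0 \<Longrightarrow>
      f3 x - (a + b + c) * f2 x + (a * b + a * c + b * c) * f1 x - a * b * c * f x = 0"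
    using ode by simp
  obtain K where h: "jet2 {..0} (\<lambda>x. f x - K * exp (a * of_real x)) (\<lambda>x. f1 x - K * a * exp (a * of_real x))
       (\<lambda>x. f2 x - K * a * a * exp (a * of_real x))"
    and ode2: "\<And>x. x \<in> {..0} \<Longrightarrow> (f2 x - K * a * a * exp (a * of_real x)) - (b + c) * (f1 x - K * a * exp (a * of_real x))
       + b * c * (f x - K * exp (a * of_real x)) = 0"
    using third_order_ode_split[OF S f ab ac ode'] by blast
  have "norm (K * exp (a * of_real x)) \<le> norm K" if "x \<le> 0" for x
    using less_imp_le[OF a] that by (simp add: norm_mult mult_nonneg_nonpos mult_left_le)
  then have "bounded ((\<lambda>x. K * exp (a * of_real x)) ` {..0})"
    unfolding bounded_iff by auto
  then have "bounded ((\<lambda>x. f x - K * exp (a * of_real x)) ` {..0})"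
    by (rule bounded_minus_comp[OF bounded])
  then have h0: "f x - K * exp (a * of_real x) = 0" if "x \<le> 0" for x
    using second_order_ode_bounded_left_imp_zero[OF h _ ode2 b c that] by blast
  have h1: "f1 x - K * a * exp (a * of_real x) = 0" if "x \<le> 0" for x
  proof (rule has_vector_derivative_vanishing_imp_zero[OF at_within_Iic_nontrivial])
    show "((\<lambda>x. f x - K * exp (a * of_real x)) has_vector_derivative f1 x - K * a * exp (a * of_real x))
        (at x within {..0})"
      using h that by (simp add: jet2_def)
  qed (use that h0 in auto)
  have h2: "f2 0 - K * a * a * exp (a * of_real 0) = 0"
  proof (rule has_vector_derivative_vanishing_imp_zero[OF at_within_Iic_nontrivial])
    show "((\<lambda>x. f1 x - K * a * exp (a * of_real x)) has_vector_derivative f2 0 - K * a * a * exp (a * of_real 0))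
        (at 0 within {..0})"
      using h[unfolded jet2_def, rule_format, of 0] by simp
  qed (use h1 in auto)
  have "f 0 = K"
    using h0[of 0] by simp
  then show "\<And>x. x \<le> 0 \<Longrightarrow> f x = f 0 * exp (a * of_real x)" "f1 0 = a * f 0" "f2 0 = a * a * f 0"
    using h0 h1[of 0] h2 by (auto simp: algebra_simps)
qed

lemma third_order_ode_bounded_right:
  fixes a b c :: complex
  assumes f: "jet3 {0..} f f1 f2 f3" and bounded: "bounded (f ` {0..})"
    and ode: "\<And>x. x > 0 \<Longrightarrow>
      f3 x - (a + b + c) * f2 x + (a * b + a * c + b * c) * f1 x - a * b * c * f x = 0"
    and a: "Re a > 0" and b: "Re b < 0" and c: "Re c < 0" and "x \<ge> 0"
  shows "f2 x - (b + c) * f1 x + b * c * f x = 0"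
proof -
  have S: "convex {0::real..}" "0 \<in> {0::real..}"
    by auto
  have ab: "a \<noteq> b" and ac: "a \<noteq> c"
    using a b c by auto
  have ode': "\<And>x. x \<in> {0..} \<Longrightarrow> x \<noteq> 0 \<Longrightarrow>
      f3 x - (a + b + c) * f2 x + (a * b + a * c + b * c) * f1 x - a * b * c * f x = 0"
    using ode by simp
  obtain K where h: "jet2 {0..} (\<lambda>x. f x - K * exp (a * of_real x)) (\<lambda>x. f1 x - K * a * exp (a * of_real x))
       (\<lambda>x. f2 x - K * a * a * exp (a * of_real x))"
    and ode2: "\<And>x. x \<in> {0..} \<Longrightarrow> (f2 x - K * a * a * exp (a * of_real x)) - (b + c) * (f1 x - K * a * exp (a * of_real x))
       + b * c * (f x - K * exp (a * of_real x)) = 0"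
    using third_order_ode_split[OF S f ab ac ode'] by blast
  have "bounded ((\<lambda>x. f x - K * exp (a * of_real x)) ` {0..})"
    using second_order_ode_bounded_right[OF h ode2 b c] .
  then have "bounded ((\<lambda>x. f x - (f x - K * exp (a * of_real x))) ` {0..})"
    by (rule bounded_minus_comp[OF bounded])
  then obtain M where "\<And>x. x \<ge> 0 \<Longrightarrow> norm (K * exp (a * of_real x)) \<le> M"
    unfolding bounded_iff by auto
  \<comment> \<open>reflect \<open>x\<close> to \<open>-x\<close> to use the left half-line lemma\<close>
  then have "norm (K * exp (- a * of_real x)) \<le> M" if "x \<le> 0" for x
    using that by (metis minus_mult_commute neg_0_le_iff_le of_real_minus)
  then have "K = 0"
    using bounded_left_cexp_imp_zero[of K "- a" M] a by simp
  then show ?thesis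
    using ode2[of x] \<open>x \<ge> 0\<close> by simp
qed


section \<open>The Fourier symbols of \<open>G\<close> and \<open>L\<close>\<close>

lemma smooth3_imp_jet3: "smooth3 S f \<Longrightarrow> jet3 S f (Dx S f) (Dx S (Dx S f)) (Dx S (Dx S (Dx S f)))"
  unfolding smooth3_def jet3_def jet2_def by blast

lemma Dx_UNIV_zero [simp]: "Dx UNIV (\<lambda>_. 0) = (\<lambda>_. 0)"
  by (simp add: Dx_def fun_eq_iff)

lemma smooth3_zero: "smooth3 UNIV (\<lambda>_. 0)"
  unfolding smooth3_def by simp

lemma conormal_n1: "conormal c u v S \<xi> n1 w x
    = of_real (c\<^sup>2 - u\<^sup>2) * Dx S w x - of_real (u * v) * (\<i> * of_real \<xi>) * w x"
  by (simp add: conormal_def n1_def)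

lemma conormal_n2: "conormal c u v S \<xi> n2 w x
    = - (of_real (c\<^sup>2 - u\<^sup>2) * Dx S w x - of_real (u * v) * (\<i> * of_real \<xi>) * w x)"
  by (simp add: conormal_def n2_def)

lemma a_dot_n1: "a_dot \<beta> u v n1 / 2 = \<beta> * u" and a_dot_n2: "a_dot \<beta> u v n2 / 2 = - (\<beta> * u)"
  by (simp_all add: a_dot_def n1_def n2_def)

locale fourier_mode =
  fixes \<beta> c u v \<xi> :: real
  assumes \<beta>_pos: "\<beta> > 0" and u_pos: "0 < u" and u_less_c: "u < c"
begin

abbreviation G :: "real set \<Rightarrow> (real \<Rightarrow> complex) \<Rightarrow> real \<Rightarrow> complex"
  where "G S f \<equiv> Gh \<beta> u v S \<xi> f"

abbreviation L :: "real set \<Rightarrow> (real \<Rightarrow> complex) \<Rightarrow> real \<Rightarrow> complex"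
  where "L S w \<equiv> Lh \<beta> c u v S \<xi> w"

definition \<alpha> :: complex
  where "\<alpha> = of_real \<beta> + of_real v * (\<i> * of_real \<xi>)"

definition \<nu> :: real
  where "\<nu> = c\<^sup>2 - u\<^sup>2"

definition \<sigma> :: complex
  where "\<sigma> = csqrt (of_real (c\<^sup>2) * \<alpha>\<^sup>2 + of_real (\<nu> * c\<^sup>2 * \<xi>\<^sup>2))"

text \<open>The characteristic roots of \<open>L G\<close> are the roots
  \<open>\<mu>\<^sub>p\<close>, \<open>\<mu>\<^sub>m\<close> of \<open>\<nu> \<mu>\<^sup>2 - 2 u \<alpha> \<mu> - (\<alpha>\<^sup>2 + c\<^sup>2 \<xi>\<^sup>2)\<close> and the root \<open>\<mu>\<^sub>0\<close> of \<open>\<alpha> + u \<mu>\<close>.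
  Since \<open>Re \<mu>\<^sub>p > 0 > Re \<mu>\<^sub>m, Re \<mu>\<^sub>0\<close>, bounded solutions of \<open>L G e = 0\<close> are multiples of
  \<open>exp (\<mu>\<^sub>p x)\<close> on \<open>x \<le> 0\<close> and combinations of \<open>exp (\<mu>\<^sub>m x)\<close>, \<open>exp (\<mu>\<^sub>0 x)\<close> on \<open>x \<ge> 0\<close>.\<close>

definition \<mu>\<^sub>p :: complex
  where "\<mu>\<^sub>p = (of_real u * \<alpha> + \<sigma>) / of_real \<nu>"

definition \<mu>\<^sub>m :: complex
  where "\<mu>\<^sub>m = (of_real u * \<alpha> - \<sigma>) / of_real \<nu>"

definition \<mu>\<^sub>0 :: complex
  where "\<mu>\<^sub>0 = - \<alpha> / of_real u"

lemma \<nu>_pos: "\<nu> > 0"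
  using u_pos u_less_c by (simp add: \<nu>_def power_strict_mono)

lemma Re_\<alpha>: "Re \<alpha> = \<beta>"
  by (simp add: \<alpha>_def)

lemma \<sigma>_sq: "\<sigma>\<^sup>2 = of_real (c\<^sup>2) * \<alpha>\<^sup>2 + of_real (\<nu> * c\<^sup>2 * \<xi>\<^sup>2)"
  by (simp add: \<sigma>_def)

lemma Re_\<sigma>_gt: "Re \<sigma> > u * \<beta>"
proof (rule ccontr)
  define p where "p = Re \<sigma>"
  define q where "q = Im \<sigma>"
  define R where "R = c\<^sup>2 * (\<beta>\<^sup>2 - v\<^sup>2 * \<xi>\<^sup>2) + \<nu> * c\<^sup>2 * \<xi>\<^sup>2"
  define T where "T = c\<^sup>2 * \<beta> * v * \<xi>"
  define B where "B = u\<^sup>2 * \<beta>\<^sup>2"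
  assume "\<not> Re \<sigma> > u * \<beta>"
  moreover have "p \<ge> 0"
    unfolding p_def \<sigma>_def by (rule Re_csqrt)
  ultimately have "p\<^sup>2 \<le> B"
    using power_mono[of p "u * \<beta>" 2] by (simp add: p_def B_def power_mult_distrib)
  have "p\<^sup>2 - q\<^sup>2 = R"
    using arg_cong[OF \<sigma>_sq, of Re] by (simp add: p_def q_def R_def \<alpha>_def power2_eq_square algebra_simps)
  moreover have "p * q = T"
    using arg_cong[OF \<sigma>_sq, of Im] by (simp add: p_def q_def T_def \<alpha>_def power2_eq_square algebra_simps)
  ultimately have "T\<^sup>2 = p\<^sup>2 * (p\<^sup>2 - R)"
    by (metis add_diff_cancel_left' diff_add_cancel power_mult_distrib)
  also have "\<dots> \<le> B * (B - R)"
    using \<open>p\<^sup>2 \<le> B\<close> \<open>p\<^sup>2 - q\<^sup>2 = R\<close> by (intro mult_mono) (auto simp: B_def)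
  finally have "T\<^sup>2 \<le> B * (B - R)" .
  \<comment> \<open>this is where \<open>u < c\<close> enters\<close>
  moreover have "B * (B - R) - T\<^sup>2 = - (\<nu> * \<beta>\<^sup>2 * (u\<^sup>2 * \<beta>\<^sup>2 + c\<^sup>2 * v\<^sup>2 * \<xi>\<^sup>2 + u\<^sup>2 * c\<^sup>2 * \<xi>\<^sup>2))"
    by (simp add: B_def R_def T_def \<nu>_def power2_eq_square algebra_simps)
  moreover have "\<nu> * \<beta>\<^sup>2 * (u\<^sup>2 * \<beta>\<^sup>2 + c\<^sup>2 * v\<^sup>2 * \<xi>\<^sup>2 + u\<^sup>2 * c\<^sup>2 * \<xi>\<^sup>2) > 0"
    using \<nu>_pos \<beta>_pos u_pos by (intro mult_pos_pos add_pos_nonneg) auto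
  ultimately show False
    by linarith
qed

lemma \<sigma>_nonzero: "\<sigma> \<noteq> 0"
  using Re_\<sigma>_gt mult_pos_pos[OF u_pos \<beta>_pos] by auto

lemma Re_\<mu>\<^sub>p: "Re \<mu>\<^sub>p > 0"
  using Re_\<sigma>_gt mult_pos_pos[OF u_pos \<beta>_pos] \<nu>_pos by (simp add: \<mu>\<^sub>p_def Re_\<alpha>)

lemma Re_\<mu>\<^sub>m: "Re \<mu>\<^sub>m < 0"
  using Re_\<sigma>_gt \<nu>_pos by (simp add: \<mu>\<^sub>m_def Re_\<alpha> divide_neg_pos)

lemma Re_\<mu>\<^sub>0: "Re \<mu>\<^sub>0 < 0"
  using \<beta>_pos u_pos by (simp add: \<mu>\<^sub>0_def Re_\<alpha>)

lemma \<alpha>_eq: "\<alpha> = - of_real u * \<mu>\<^sub>0"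
  using u_pos by (simp add: \<mu>\<^sub>0_def)

lemma \<mu>\<^sub>p_\<sigma>: "of_real \<nu> * \<mu>\<^sub>p = of_real u * \<alpha> + \<sigma>"
  and \<mu>\<^sub>m_\<sigma>: "of_real \<nu> * \<mu>\<^sub>m = of_real u * \<alpha> - \<sigma>"
  using \<nu>_pos by (simp_all add: \<mu>\<^sub>p_def \<mu>\<^sub>m_def)

lemma \<alpha>_plus_u_\<mu>\<^sub>p_nonzero: "\<alpha> + of_real u * \<mu>\<^sub>p \<noteq> 0"
proof -
  have "Re (\<alpha> + of_real u * \<mu>\<^sub>p) > 0"
    using \<beta>_pos u_pos Re_\<mu>\<^sub>p by (simp add: Re_\<alpha> add_pos_pos)
  then show ?thesis
    by (metis less_irrefl zero_complex.sel(1))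
qed

lemma \<mu>_sum: "2 * of_real u * \<alpha> = of_real \<nu> * (\<mu>\<^sub>p + \<mu>\<^sub>m)"
  using \<mu>\<^sub>p_\<sigma> \<mu>\<^sub>m_\<sigma> by (simp add: distrib_left)

lemma \<mu>_prod: "\<alpha>\<^sup>2 + of_real (c\<^sup>2 * \<xi>\<^sup>2) = - of_real \<nu> * (\<mu>\<^sub>p * \<mu>\<^sub>m)"
proof -
  have "of_real \<nu> * (of_real \<nu> * (\<mu>\<^sub>p * \<mu>\<^sub>m)) = (of_real u * \<alpha>)\<^sup>2 - \<sigma>\<^sup>2"
    using \<mu>\<^sub>p_\<sigma> \<mu>\<^sub>m_\<sigma> by (metis mult.left_commute mult.assoc power2_eq_square square_diff_square_factored)
  also have "\<dots> = of_real \<nu> * (- (\<alpha>\<^sup>2 + of_real (c\<^sup>2 * \<xi>\<^sup>2)))"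
    unfolding \<sigma>_sq by (simp add: \<nu>_def algebra_simps power2_eq_square)
  finally have "of_real \<nu> * (\<mu>\<^sub>p * \<mu>\<^sub>m) = - (\<alpha>\<^sup>2 + of_real (c\<^sup>2 * \<xi>\<^sup>2))"
    using \<nu>_pos by simp
  then show ?thesis
    by simp
qed

definition LG_poly :: "complex \<Rightarrow> complex \<Rightarrow> complex \<Rightarrow> complex \<Rightarrow> complex"
  where "LG_poly f0 f1 f2 f3 = f3 - (\<mu>\<^sub>p + \<mu>\<^sub>m + \<mu>\<^sub>0) * f2
    + (\<mu>\<^sub>p * \<mu>\<^sub>m + \<mu>\<^sub>p * \<mu>\<^sub>0 + \<mu>\<^sub>m * \<mu>\<^sub>0) * f1 - \<mu>\<^sub>p * \<mu>\<^sub>m * \<mu>\<^sub>0 * f0"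

lemma LG_poly_diff:
  "LG_poly (f0 - g0) (f1 - g1) (f2 - g2) (f3 - g3) = LG_poly f0 f1 f2 f3 - LG_poly g0 g1 g2 g3"
  by (simp add: LG_poly_def algebra_simps)

lemma Gh_symbol: "G S f = (\<lambda>x. \<alpha> * f x + of_real u * Dx S f x)"
  by (simp add: fun_eq_iff Gh_def \<alpha>_def algebra_simps)

lemma Lh_symbol: "L S w x = (\<alpha>\<^sup>2 + of_real (c\<^sup>2 * \<xi>\<^sup>2)) * w x + 2 * of_real u * \<alpha> * Dx S w x
    - of_real \<nu> * Dx S (Dx S w) x"
  by (simp add: Lh_def \<alpha>_def \<nu>_def algebra_simps power2_eq_square)

lemma Dx_Gh:
  assumes f: "smooth3 S f" and "x \<in> S" "at x within S \<noteq> bot"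
  shows "Dx S (G S f) x = \<alpha> * Dx S f x + of_real u * Dx S (Dx S f) x"
proof -
  have "(G S f has_vector_derivative \<alpha> * Dx S f x + of_real u * Dx S (Dx S f) x) (at x within S)"
    unfolding Gh_symbol using f \<open>x \<in> S\<close> unfolding smooth3_def
    by (auto intro!: has_vector_derivative_add has_vector_derivative_mult_right)
  then show ?thesis
    unfolding Dx_def[of S "G S f"] by (rule vector_derivative_within[OF \<open>at x within S \<noteq> bot\<close>])
qed

lemma Dx_Dx_Gh:
  assumes f: "smooth3 S f" and "x \<in> S" and nontriv: "\<And>y. y \<in> S \<Longrightarrow> at y within S \<noteq> bot"
  shows "Dx S (Dx S (G S f)) x = \<alpha> * Dx S (Dx S f) x + of_real u * Dx S (Dx S (Dx S f)) x"
proof -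
  have "((\<lambda>y. \<alpha> * Dx S f y + of_real u * Dx S (Dx S f) y) has_vector_derivative
      \<alpha> * Dx S (Dx S f) x + of_real u * Dx S (Dx S (Dx S f)) x) (at x within S)"
    using f \<open>x \<in> S\<close> unfolding smooth3_def
    by (auto intro!: has_vector_derivative_add has_vector_derivative_mult_right)
  then have "(Dx S (G S f) has_vector_derivative
      \<alpha> * Dx S (Dx S f) x + of_real u * Dx S (Dx S (Dx S f)) x) (at x within S)"
    by (rule has_vector_derivative_transform[OF \<open>x \<in> S\<close>, rotated]) (simp add: Dx_Gh[OF f _ nontriv])
  then show ?thesis
    unfolding Dx_def[of S "Dx S (G S f)"] by (rule vector_derivative_within[OF nontriv[OF \<open>x \<in> S\<close>]])
qed

lemma Lh_Gh_factor:
  assumes f: "smooth3 S f" and "x \<in> S" and nontriv: "\<And>y. y \<in> S \<Longrightarrow> at y within S \<noteq> bot"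
  shows "L S (G S f) x = - of_real (\<nu> * u) * LG_poly (f x) (Dx S f x) (Dx S (Dx S f) x) (Dx S (Dx S (Dx S f)) x)"
proof -
  have "L S (G S f) x = (\<alpha>\<^sup>2 + of_real (c\<^sup>2 * \<xi>\<^sup>2)) * G S f x + 2 * of_real u * \<alpha> * Dx S (G S f) x
      - of_real \<nu> * Dx S (Dx S (G S f)) x"
    by (rule Lh_symbol)
  also have "\<dots> = (\<alpha>\<^sup>2 + of_real (c\<^sup>2 * \<xi>\<^sup>2)) * (\<alpha> * f x + of_real u * Dx S f x)
      + 2 * of_real u * \<alpha> * (\<alpha> * Dx S f x + of_real u * Dx S (Dx S f) x)
      - of_real \<nu> * (\<alpha> * Dx S (Dx S f) x + of_real u * Dx S (Dx S (Dx S f)) x)"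
    by (simp only: Dx_Gh[OF f \<open>x \<in> S\<close> nontriv[OF \<open>x \<in> S\<close>]] Dx_Dx_Gh[OF f \<open>x \<in> S\<close> nontriv])
      (simp add: Gh_symbol)
  also have "\<dots> = - of_real (\<nu> * u) * LG_poly (f x) (Dx S f x) (Dx S (Dx S f) x) (Dx S (Dx S (Dx S f)) x)"
    unfolding \<mu>_prod \<mu>_sum LG_poly_def by (simp add: \<alpha>_eq algebra_simps)
  finally show ?thesis .
qed

lemma LG_poly_error_zero:
  assumes F: "smooth3 S F" and q: "smooth3 UNIV q" and "x \<in> S"
    and nontriv: "\<And>y. y \<in> S \<Longrightarrow> at y within S \<noteq> bot"
    and eq: "L S (G S F) x = L UNIV (G UNIV q) x"
  shows "LG_poly (F x - q x) (Dx S F x - Dx UNIV q x) (Dx S (Dx S F) x - Dx UNIV (Dx UNIV q) x)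
      (Dx S (Dx S (Dx S F)) x - Dx UNIV (Dx UNIV (Dx UNIV q)) x) = 0"
proof -
  have "of_real (\<nu> * u) \<noteq> (0::complex)"
    using \<nu>_pos u_pos by simp
  moreover have "- of_real (\<nu> * u) * LG_poly (F x) (Dx S F x) (Dx S (Dx S F) x) (Dx S (Dx S (Dx S F)) x)
      = - of_real (\<nu> * u) * LG_poly (q x) (Dx UNIV q x) (Dx UNIV (Dx UNIV q) x) (Dx UNIV (Dx UNIV (Dx UNIV q)) x)"
    using eq Lh_Gh_factor[OF F \<open>x \<in> S\<close> nontriv] Lh_Gh_factor[OF q UNIV_I] by simp
  ultimately show ?thesis
    unfolding LG_poly_diff by simp
qed

lemma G_trace_diff:
  assumes F: "smooth3 S F" and q: "smooth3 UNIV q" and "0 \<in> S" "at 0 within S \<noteq> bot"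
  shows "G S F 0 - G UNIV q 0 = \<alpha> * (F 0 - q 0) + of_real u * (Dx S F 0 - Dx UNIV q 0)"
    and "Dx S (G S F) 0 - Dx UNIV (G UNIV q) 0
      = \<alpha> * (Dx S F 0 - Dx UNIV q 0) + of_real u * (Dx S (Dx S F) 0 - Dx UNIV (Dx UNIV q) 0)"
  using Dx_Gh[OF F assms(3,4)] Dx_Gh[OF q UNIV_I] by (simp_all add: Gh_symbol algebra_simps)

lemma left_solution:
  assumes F: "smooth3 {..0} F" "bounded (F ` {..0})" and q: "smooth3 UNIV q" "bounded (range q)"
    and eq: "\<And>x. x < 0 \<Longrightarrow> L {..0} (G {..0} F) x = L UNIV (G UNIV q) x"
  shows "\<And>x. x \<le> 0 \<Longrightarrow> F x - q x = (F 0 - q 0) * exp (\<mu>\<^sub>p * of_real x)"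
    and "G {..0} F 0 - G UNIV q 0 = (\<alpha> + of_real u * \<mu>\<^sub>p) * (F 0 - q 0)"
    and "Dx {..0} (G {..0} F) 0 - Dx UNIV (G UNIV q) 0 = \<mu>\<^sub>p * (G {..0} F 0 - G UNIV q 0)"
proof -
  let ?S = "{..0::real}"
  define e where "e x = F x - q x" for x
  define e1 where "e1 x = Dx ?S F x - Dx UNIV q x" for x
  define e2 where "e2 x = Dx ?S (Dx ?S F) x - Dx UNIV (Dx UNIV q) x" for x
  define e3 where "e3 x = Dx ?S (Dx ?S (Dx ?S F)) x - Dx UNIV (Dx UNIV (Dx UNIV q)) x" for x
  have jet: "jet3 ?S e e1 e2 e3"
    unfolding e_def e1_def e2_def e3_def
    by (rule jet3_diff[OF smooth3_imp_jet3[OF F(1)] jet3_subset[OF smooth3_imp_jet3[OF q(1)]]]) simp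
  have bounded: "bounded (e ` ?S)"
    unfolding e_def by (rule bounded_minus_comp[OF F(2) bounded_subset[OF q(2)]]) auto
  have ode: "e3 x - (\<mu>\<^sub>p + \<mu>\<^sub>m + \<mu>\<^sub>0) * e2 x + (\<mu>\<^sub>p * \<mu>\<^sub>m + \<mu>\<^sub>p * \<mu>\<^sub>0 + \<mu>\<^sub>m * \<mu>\<^sub>0) * e1 x
      - \<mu>\<^sub>p * \<mu>\<^sub>m * \<mu>\<^sub>0 * e x = 0" if "x < 0" for x
  proof -
    have "x \<in> ?S"
      using that by simp
    from LG_poly_error_zero[OF F(1) q(1) this at_within_Iic_nontrivial eq[OF that]] show ?thesis
      unfolding LG_poly_def e_def e1_def e2_def e3_def .
  qed
  note e = third_order_ode_bounded_left[OF jet bounded ode Re_\<mu>\<^sub>p Re_\<mu>\<^sub>m Re_\<mu>\<^sub>0]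
  show "\<And>x. x \<le> 0 \<Longrightarrow> F x - q x = (F 0 - q 0) * exp (\<mu>\<^sub>p * of_real x)"
    using e(1) unfolding e_def .
  note trace = G_trace_diff[OF F(1) q(1) _ at_within_Iic_nontrivial, simplified]
  have trace1: "G ?S F 0 - G UNIV q 0 = \<alpha> * e 0 + of_real u * e1 0"
    unfolding e_def e1_def by (rule trace(1))
  have trace2: "Dx ?S (G ?S F) 0 - Dx UNIV (G UNIV q) 0 = \<alpha> * e1 0 + of_real u * e2 0"
    unfolding e1_def e2_def by (rule trace(2))
  have "G ?S F 0 - G UNIV q 0 = (\<alpha> + of_real u * \<mu>\<^sub>p) * e 0"
    using trace1 e(2) by (simp add: algebra_simps)
  then show "G ?S F 0 - G UNIV q 0 = (\<alpha> + of_real u * \<mu>\<^sub>p) * (F 0 - q 0)"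
    by (simp add: e_def)
  have "Dx ?S (G ?S F) 0 - Dx UNIV (G UNIV q) 0 = \<mu>\<^sub>p * ((\<alpha> + of_real u * \<mu>\<^sub>p) * e 0)"
    using trace2 e(2,3) by (simp add: algebra_simps)
  with \<open>G ?S F 0 - G UNIV q 0 = (\<alpha> + of_real u * \<mu>\<^sub>p) * e 0\<close>
  show "Dx ?S (G ?S F) 0 - Dx UNIV (G UNIV q) 0 = \<mu>\<^sub>p * (G ?S F 0 - G UNIV q 0)"
    by simp
qed

lemma right_solution:
  assumes F: "smooth3 {0..} F" "bounded (F ` {0..})" and q: "smooth3 UNIV q" "bounded (range q)"
    and eq: "\<And>x. x > 0 \<Longrightarrow> L {0..} (G {0..} F) x = L UNIV (G UNIV q) x"
  shows "Dx {0..} (G {0..} F) 0 - Dx UNIV (G UNIV q) 0 = \<mu>\<^sub>m * (G {0..} F 0 - G UNIV q 0)"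
    and "F 0 = q 0 \<Longrightarrow> G {0..} F 0 = G UNIV q 0 \<Longrightarrow> x \<ge> 0 \<Longrightarrow> F x = q x"
proof -
  let ?S = "{0::real..}"
  define e where "e x = F x - q x" for x
  define e1 where "e1 x = Dx ?S F x - Dx UNIV q x" for x
  define e2 where "e2 x = Dx ?S (Dx ?S F) x - Dx UNIV (Dx UNIV q) x" for x
  define e3 where "e3 x = Dx ?S (Dx ?S (Dx ?S F)) x - Dx UNIV (Dx UNIV (Dx UNIV q)) x" for x
  have jet: "jet3 ?S e e1 e2 e3"
    unfolding e_def e1_def e2_def e3_def
    by (rule jet3_diff[OF smooth3_imp_jet3[OF F(1)] jet3_subset[OF smooth3_imp_jet3[OF q(1)]]]) simp
  have bounded: "bounded (e ` ?S)"
    unfolding e_def by (rule bounded_minus_comp[OF F(2) bounded_subset[OF q(2)]]) auto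
  have ode: "e3 x - (\<mu>\<^sub>p + \<mu>\<^sub>m + \<mu>\<^sub>0) * e2 x + (\<mu>\<^sub>p * \<mu>\<^sub>m + \<mu>\<^sub>p * \<mu>\<^sub>0 + \<mu>\<^sub>m * \<mu>\<^sub>0) * e1 x
      - \<mu>\<^sub>p * \<mu>\<^sub>m * \<mu>\<^sub>0 * e x = 0" if "x > 0" for x
  proof -
    have "x \<in> ?S"
      using that by simp
    from LG_poly_error_zero[OF F(1) q(1) this at_within_Ici_nontrivial eq[OF that]] show ?thesis
      unfolding LG_poly_def e_def e1_def e2_def e3_def .
  qed
  have ode2: "e2 x - (\<mu>\<^sub>m + \<mu>\<^sub>0) * e1 x + \<mu>\<^sub>m * \<mu>\<^sub>0 * e x = 0" if "x \<in> ?S" for x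
    using third_order_ode_bounded_right[OF jet bounded ode Re_\<mu>\<^sub>p Re_\<mu>\<^sub>m Re_\<mu>\<^sub>0] that by simp
  note trace = G_trace_diff[OF F(1) q(1) _ at_within_Ici_nontrivial, simplified]
  have trace1: "G ?S F 0 - G UNIV q 0 = \<alpha> * e 0 + of_real u * e1 0"
    unfolding e_def e1_def by (rule trace(1))
  have trace2: "Dx ?S (G ?S F) 0 - Dx UNIV (G UNIV q) 0 = \<alpha> * e1 0 + of_real u * e2 0"
    unfolding e1_def e2_def by (rule trace(2))
  have "Dx ?S (G ?S F) 0 - Dx UNIV (G UNIV q) 0 - \<mu>\<^sub>m * (G ?S F 0 - G UNIV q 0)
      = of_real u * (e2 0 - (\<mu>\<^sub>m + \<mu>\<^sub>0) * e1 0 + \<mu>\<^sub>m * \<mu>\<^sub>0 * e 0)"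
    unfolding trace1 trace2 \<alpha>_eq by (simp add: algebra_simps)
  also have "\<dots> = 0"
    using ode2[of 0] by simp
  finally show "Dx ?S (G ?S F) 0 - Dx UNIV (G UNIV q) 0 = \<mu>\<^sub>m * (G ?S F 0 - G UNIV q 0)"
    by simp
  assume "F 0 = q 0" "G ?S F 0 = G UNIV q 0" "x \<ge> 0"
  then have "e 0 = 0" and "of_real u * e1 0 = 0"
    using trace1 by (simp_all add: e_def)
  then have "e 0 = 0" and "e1 0 = 0"
    using u_pos by simp_all
  have "e x = 0"
    by (rule second_order_ode_zero_initial[OF _ _ _ jet3_imp_jet2[OF jet] ode2 \<open>e 0 = 0\<close> \<open>e1 0 = 0\<close>])
      (use \<open>x \<ge> 0\<close> in auto)
  then show "F x = q x"
    by (simp add: e_def)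
qed

lemma G_UNIV_zero [simp]: "G UNIV (\<lambda>_. 0) = (\<lambda>_. 0)"
  by (simp add: Gh_symbol)

lemma L_UNIV_zero [simp]: "L UNIV (\<lambda>_. 0) x = 0"
  by (simp add: Lh_symbol)

lemma left_homogeneous_trace:
  assumes F: "smooth3 {..0} F" "bounded (F ` {..0})" and eq: "\<And>x. x < 0 \<Longrightarrow> L {..0} (G {..0} F) x = 0"
  shows "G {..0} F 0 = (\<alpha> + of_real u * \<mu>\<^sub>p) * F 0"
    and "conormal c u v {..0} \<xi> n1 (G {..0} F) 0 - of_real (a_dot \<beta> u v n1 / 2) * G {..0} F 0
      = \<sigma> * G {..0} F 0"
proof -
  have "bounded (range (\<lambda>_::real. 0::complex))"
    by simp
  note sol = left_solution[OF F smooth3_zero this] 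
  show "G {..0} F 0 = (\<alpha> + of_real u * \<mu>\<^sub>p) * F 0"
    using sol(2) eq by simp
  have "Dx {..0} (G {..0} F) 0 = \<mu>\<^sub>p * G {..0} F 0"
    using sol(3) eq by simp
  then have "conormal c u v {..0} \<xi> n1 (G {..0} F) 0 - of_real (a_dot \<beta> u v n1 / 2) * G {..0} F 0
      = (of_real \<nu> * \<mu>\<^sub>p - of_real u * \<alpha>) * G {..0} F 0"
    unfolding conormal_n1 a_dot_n1 by (simp add: \<nu>_def \<alpha>_def algebra_simps)
  then show "conormal c u v {..0} \<xi> n1 (G {..0} F) 0 - of_real (a_dot \<beta> u v n1 / 2) * G {..0} F 0
      = \<sigma> * G {..0} F 0"
    by (simp add: \<mu>\<^sub>p_\<sigma>)
qed

lemma right_homogeneous_trace: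
  assumes F: "smooth3 {0..} F" "bounded (F ` {0..})" and eq: "\<And>x. x > 0 \<Longrightarrow> L {0..} (G {0..} F) x = 0"
  shows "conormal c u v {0..} \<xi> n2 (G {0..} F) 0 - of_real (a_dot \<beta> u v n2 / 2) * G {0..} F 0
      = \<sigma> * G {0..} F 0"
proof -
  have "bounded (range (\<lambda>_::real. 0::complex))"
    by simp
  note sol = right_solution[OF F smooth3_zero this]
  have "Dx {0..} (G {0..} F) 0 = \<mu>\<^sub>m * G {0..} F 0"
    using sol(1) eq by simp
  then have "conormal c u v {0..} \<xi> n2 (G {0..} F) 0 - of_real (a_dot \<beta> u v n2 / 2) * G {0..} F 0
      = (of_real u * \<alpha> - of_real \<nu> * \<mu>\<^sub>m) * G {0..} F 0"
    unfolding conormal_n2 a_dot_n2 by (simp add: \<nu>_def \<alpha>_def algebra_simps)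
  then show ?thesis
    by (simp add: \<mu>\<^sub>m_\<sigma>)
qed

lemma flux_jump:
  assumes F1: "smooth3 {..0} F1" "bounded (F1 ` {..0})"
      "\<And>x. x < 0 \<Longrightarrow> L {..0} (G {..0} F1) x = L UNIV (G UNIV q) x"
    and F2: "smooth3 {0..} F2" "bounded (F2 ` {0..})"
      "\<And>x. x > 0 \<Longrightarrow> L {0..} (G {0..} F2) x = L UNIV (G UNIV q) x"
    and q: "smooth3 UNIV q" "bounded (range q)"
    and traces: "G {..0} F1 0 = G {0..} F2 0"
  shows "conormal c u v {..0} \<xi> n1 (G {..0} F1) 0 + conormal c u v {0..} \<xi> n2 (G {0..} F2) 0
    = 2 * \<sigma> * (G {..0} F1 0 - G UNIV q 0)"
proof -
  define E where "E = G {..0} F1 0 - G UNIV q 0"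
  have V1: "Dx {..0} (G {..0} F1) 0 = Dx UNIV (G UNIV q) 0 + \<mu>\<^sub>p * E"
    using left_solution(3)[OF F1(1,2) q F1(3)] by (simp add: E_def algebra_simps)
  have V2: "Dx {0..} (G {0..} F2) 0 = Dx UNIV (G UNIV q) 0 + \<mu>\<^sub>m * E"
    using right_solution(1)[OF F2(1,2) q F2(3)] traces by (simp add: E_def algebra_simps)
  have "conormal c u v {..0} \<xi> n1 (G {..0} F1) 0 + conormal c u v {0..} \<xi> n2 (G {0..} F2) 0
      = (of_real \<nu> * \<mu>\<^sub>p - of_real \<nu> * \<mu>\<^sub>m) * E"
    unfolding conormal_n1 conormal_n2 V1 V2 traces by (simp add: \<nu>_def algebra_simps)
  also have "of_real \<nu> * \<mu>\<^sub>p - of_real \<nu> * \<mu>\<^sub>m = 2 * \<sigma>"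
    unfolding \<mu>\<^sub>p_\<sigma> \<mu>\<^sub>m_\<sigma> by simp
  finally show ?thesis
    by (simp add: E_def)
qed

end

section \<open>One Fourier mode of the iteration\<close>

locale two_step_iteration = fourier_mode +
  fixes g Q :: "real \<Rightarrow> complex" and Q1 Q2 Qt1 Qt2 :: "nat \<Rightarrow> real \<Rightarrow> complex"
  assumes Q_smooth: "smooth3 UNIV Q" and Q_bounded: "bounded (range Q)"
    and Q_eq: "\<And>x. L UNIV (G UNIV Q) x = g x"
    and init: "G {..0} (Q1 0) 0 = G {0..} (Q2 0) 0"
    and Qt1_smooth: "\<And>k. smooth3 {..0} (Qt1 k)" and Qt1_bounded: "\<And>k. bounded (Qt1 k ` {..0})"
    and Qt1_eq: "\<And>k x. x < 0 \<Longrightarrow> L {..0} (G {..0} (Qt1 k)) x = 0"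
    and Qt1_robin: "\<And>k. conormal c u v {..0} \<xi> n1 (G {..0} (Qt1 k)) 0
        - of_real (a_dot \<beta> u v n1 / 2) * G {..0} (Qt1 k) 0
      = - (1/2) * (conormal c u v {..0} \<xi> n1 (G {..0} (Q1 k)) 0 + conormal c u v {0..} \<xi> n2 (G {0..} (Q2 k)) 0)"
    and Qt2_smooth: "\<And>k. smooth3 {0..} (Qt2 k)" and Qt2_bounded: "\<And>k. bounded (Qt2 k ` {0..})"
    and Qt2_eq: "\<And>k x. x > 0 \<Longrightarrow> L {0..} (G {0..} (Qt2 k)) x = 0"
    and Qt2_robin: "\<And>k. conormal c u v {0..} \<xi> n2 (G {0..} (Qt2 k)) 0
        - of_real (a_dot \<beta> u v n2 / 2) * G {0..} (Qt2 k) 0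
      = - (1/2) * (conormal c u v {..0} \<xi> n1 (G {..0} (Q1 k)) 0 + conormal c u v {0..} \<xi> n2 (G {0..} (Q2 k)) 0)"
    and Q1_smooth: "\<And>k. smooth3 {..0} (Q1 (Suc k))" and Q1_bounded: "\<And>k. bounded (Q1 (Suc k) ` {..0})"
    and Q1_eq: "\<And>k x. x < 0 \<Longrightarrow> L {..0} (G {..0} (Q1 (Suc k))) x = g x"
    and Q1_trace: "\<And>k. G {..0} (Q1 (Suc k)) 0
      = G {..0} (Q1 k) 0 + (1/2) * (G {..0} (Qt1 k) 0 + G {0..} (Qt2 k) 0)"
    and Q2_smooth: "\<And>k. smooth3 {0..} (Q2 (Suc k))" and Q2_bounded: "\<And>k. bounded (Q2 (Suc k) ` {0..})"
    and Q2_eq: "\<And>k x. x > 0 \<Longrightarrow> L {0..} (G {0..} (Q2 (Suc k))) x = g x"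
    and Q2_trace: "\<And>k. G {0..} (Q2 (Suc k)) 0
      = G {0..} (Q2 k) 0 + (1/2) * (G {..0} (Qt1 k) 0 + G {0..} (Qt2 k) 0)"
    and Q2_value: "\<And>k. Q2 (Suc k) 0 = Q1 k 0 + Qt1 k 0"
begin

lemma correction_traces_agree: "G {0..} (Qt2 k) 0 = G {..0} (Qt1 k) 0"
proof -
  have "\<sigma> * G {0..} (Qt2 k) 0 = \<sigma> * G {..0} (Qt1 k) 0"
    using right_homogeneous_trace(1)[OF Qt2_smooth Qt2_bounded Qt2_eq] Qt2_robin
      left_homogeneous_trace(2)[OF Qt1_smooth Qt1_bounded Qt1_eq] Qt1_robin by simp
  then show ?thesis
    using \<sigma>_nonzero by simp
qed

lemma traces_step:
  "G {..0} (Q1 (Suc k)) 0 = G {..0} (Q1 k) 0 + G {..0} (Qt1 k) 0"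
  "G {0..} (Q2 (Suc k)) 0 = G {0..} (Q2 k) 0 + G {..0} (Qt1 k) 0"
  using Q1_trace Q2_trace by (simp_all add: correction_traces_agree)

lemma traces_agree: "G {..0} (Q1 k) 0 = G {0..} (Q2 k) 0"
  by (induction k) (simp_all add: init traces_step)

lemma correction_cancels_error:
  "G {..0} (Qt1 (Suc k)) 0 = - (G {..0} (Q1 (Suc k)) 0 - G UNIV Q 0)"
proof -
  have "\<sigma> * G {..0} (Qt1 (Suc k)) 0 = - (1/2) * (2 * \<sigma> * (G {..0} (Q1 (Suc k)) 0 - G UNIV Q 0))"
    using left_homogeneous_trace(2)[OF Qt1_smooth Qt1_bounded Qt1_eq] Qt1_robin
      flux_jump[OF Q1_smooth Q1_bounded _ Q2_smooth Q2_bounded _ Q_smooth Q_bounded traces_agree]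
      Q1_eq Q2_eq Q_eq by simp
  then have "\<sigma> * G {..0} (Qt1 (Suc k)) 0 = \<sigma> * (- (G {..0} (Q1 (Suc k)) 0 - G UNIV Q 0))"
    by (simp add: algebra_simps)
  then show ?thesis
    using \<sigma>_nonzero mult_left_cancel by blast
qed

lemma traces_converged:
  "G {..0} (Q1 (Suc (Suc k))) 0 = G UNIV Q 0"
  "G {0..} (Q2 (Suc (Suc k))) 0 = G UNIV Q 0"
  using traces_step[of "Suc k"] traces_agree[of "Suc k"] correction_cancels_error[of k] by simp_all

lemma left_converged:
  assumes "x < 0"
  shows "Q1 (Suc (Suc k)) x = Q x"
proof -
  note sol = left_solution[OF Q1_smooth Q1_bounded Q_smooth Q_bounded, of "Suc k"]
  have "(\<alpha> + of_real u * \<mu>\<^sub>p) * (Q1 (Suc (Suc k)) 0 - Q 0) = 0"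
    using sol(2) traces_converged(1) Q1_eq Q_eq by simp
  then have "Q1 (Suc (Suc k)) 0 = Q 0"
    using \<alpha>_plus_u_\<mu>\<^sub>p_nonzero by simp
  then show ?thesis
    using sol(1)[of x] Q1_eq Q_eq \<open>x < 0\<close> by simp
qed

lemma right_converged:
  assumes "x > 0"
  shows "Q2 (Suc (Suc k)) x = Q x"
proof -
  have "(\<alpha> + of_real u * \<mu>\<^sub>p) * (Q2 (Suc (Suc k)) 0 - Q 0)
      = (\<alpha> + of_real u * \<mu>\<^sub>p) * (Q1 (Suc k) 0 - Q 0) + (\<alpha> + of_real u * \<mu>\<^sub>p) * Qt1 (Suc k) 0"
    by (simp add: Q2_value algebra_simps)
  also have "(\<alpha> + of_real u * \<mu>\<^sub>p) * (Q1 (Suc k) 0 - Q 0) = G {..0} (Q1 (Suc k)) 0 - G UNIV Q 0"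
    using left_solution(2)[OF Q1_smooth Q1_bounded Q_smooth Q_bounded] Q1_eq Q_eq by simp
  also have "(\<alpha> + of_real u * \<mu>\<^sub>p) * Qt1 (Suc k) 0 = - (G {..0} (Q1 (Suc k)) 0 - G UNIV Q 0)"
    using left_homogeneous_trace(1)[OF Qt1_smooth Qt1_bounded Qt1_eq] correction_cancels_error by simp
  finally have "(\<alpha> + of_real u * \<mu>\<^sub>p) * (Q2 (Suc (Suc k)) 0 - Q 0) = 0"
    by simp
  then have "Q2 (Suc (Suc k)) 0 = Q 0"
    using \<alpha>_plus_u_\<mu>\<^sub>p_nonzero by simp
  then show ?thesis
    using right_solution(2)[OF Q2_smooth Q2_bounded Q_smooth Q_bounded _ _ _ less_imp_le[OF \<open>x > 0\<close>]]
      traces_converged(2) Q2_eq Q_eq by simp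
qed

end

theorem mainTheorem2:
  fixes \<beta> c u v :: real
    and g Q :: "real \<Rightarrow> real \<Rightarrow> complex"
    and Q1 Q2 Qt1 Qt2 :: "nat \<Rightarrow> real \<Rightarrow> real \<Rightarrow> complex"
  assumes "\<beta> > 0" and "c > 0" and "0 < u" and "u < c"
    \<comment> \<open>Q solves L G Q = g in R^2 (Fourier sense: bounded in x for each xi)\<close>
    and sol: "\<forall>\<xi>. smooth3 UNIV (Q \<xi>) \<and> bounded (range (Q \<xi>)) \<and>
               (\<forall>x. Lh \<beta> c u v UNIV \<xi> (Gh \<beta> u v UNIV \<xi> (Q \<xi>)) x = g \<xi> x)"
    \<comment> \<open>initial values with G Q^{1,0} = G Q^{2,0} on Gamma\<close>
    and init: "\<forall>\<xi>. smooth3 {..0} (Q1 0 \<xi>) \<and> smooth3 {0..} (Q2 0 \<xi>) \<and>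
               Gh \<beta> u v {..0} \<xi> (Q1 0 \<xi>) 0 = Gh \<beta> u v {0..} \<xi> (Q2 0 \<xi>) 0"
    \<comment> \<open>correction step, first subdomain\<close>
    and corr1: "\<forall>k \<xi>. smooth3 {..0} (Qt1 k \<xi>) \<and> bounded (Qt1 k \<xi> ` {..0}) \<and>
               (\<forall>x<0. Lh \<beta> c u v {..0} \<xi> (Gh \<beta> u v {..0} \<xi> (Qt1 k \<xi>)) x = 0) \<and>
               conormal c u v {..0} \<xi> n1 (Gh \<beta> u v {..0} \<xi> (Qt1 k \<xi>)) 0
                 - of_real (a_dot \<beta> u v n1 / 2) * Gh \<beta> u v {..0} \<xi> (Qt1 k \<xi>) 0
               = - (1/2) * (conormal c u v {..0} \<xi> n1 (Gh \<beta> u v {..0} \<xi> (Q1 k \<xi>)) 0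
                            + conormal c u v {0..} \<xi> n2 (Gh \<beta> u v {0..} \<xi> (Q2 k \<xi>)) 0)"
    \<comment> \<open>correction step, second subdomain\<close>
    and corr2: "\<forall>k \<xi>. smooth3 {0..} (Qt2 k \<xi>) \<and> bounded (Qt2 k \<xi> ` {0..}) \<and>
               (\<forall>x>0. Lh \<beta> c u v {0..} \<xi> (Gh \<beta> u v {0..} \<xi> (Qt2 k \<xi>)) x = 0) \<and>
               conormal c u v {0..} \<xi> n2 (Gh \<beta> u v {0..} \<xi> (Qt2 k \<xi>)) 0
                 - of_real (a_dot \<beta> u v n2 / 2) * Gh \<beta> u v {0..} \<xi> (Qt2 k \<xi>) 0
               = - (1/2) * (conormal c u v {..0} \<xi> n1 (Gh \<beta> u v {..0} \<xi> (Q1 k \<xi>)) 0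
                            + conormal c u v {0..} \<xi> n2 (Gh \<beta> u v {0..} \<xi> (Q2 k \<xi>)) 0) \<and>
               Qt2 k \<xi> 0 = 0"
    \<comment> \<open>update step, first subdomain\<close>
    and upd1: "\<forall>k \<xi>. smooth3 {..0} (Q1 (Suc k) \<xi>) \<and> bounded (Q1 (Suc k) \<xi> ` {..0}) \<and>
               (\<forall>x<0. Lh \<beta> c u v {..0} \<xi> (Gh \<beta> u v {..0} \<xi> (Q1 (Suc k) \<xi>)) x = g \<xi> x) \<and>
               Gh \<beta> u v {..0} \<xi> (Q1 (Suc k) \<xi>) 0
               = Gh \<beta> u v {..0} \<xi> (Q1 k \<xi>) 0
                 + (1/2) * (Gh \<beta> u v {..0} \<xi> (Qt1 k \<xi>) 0 + Gh \<beta> u v {0..} \<xi> (Qt2 k \<xi>) 0)"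
    \<comment> \<open>update step, second subdomain\<close>
    and upd2: "\<forall>k \<xi>. smooth3 {0..} (Q2 (Suc k) \<xi>) \<and> bounded (Q2 (Suc k) \<xi> ` {0..}) \<and>
               (\<forall>x>0. Lh \<beta> c u v {0..} \<xi> (Gh \<beta> u v {0..} \<xi> (Q2 (Suc k) \<xi>)) x = g \<xi> x) \<and>
               Gh \<beta> u v {0..} \<xi> (Q2 (Suc k) \<xi>) 0
               = Gh \<beta> u v {0..} \<xi> (Q2 k \<xi>) 0
                 + (1/2) * (Gh \<beta> u v {..0} \<xi> (Qt1 k \<xi>) 0 + Gh \<beta> u v {0..} \<xi> (Qt2 k \<xi>) 0) \<and>
               Q2 (Suc k) \<xi> 0 = Q1 k \<xi> 0 + Qt1 k \<xi> 0"
  shows "\<forall>\<xi>. (\<forall>x<0. Q1 2 \<xi> x = Q \<xi> x) \<and> (\<forall>x>0. Q2 2 \<xi> x = Q \<xi> x)"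
proof (intro allI)
  fix \<xi> :: real
  interpret two_step_iteration \<beta> c u v \<xi> "g \<xi>" "Q \<xi>" "\<lambda>k. Q1 k \<xi>" "\<lambda>k. Q2 k \<xi>" "\<lambda>k. Qt1 k \<xi>" "\<lambda>k. Qt2 k \<xi>"
    by unfold_locales (use assms in blast)+
  show "(\<forall>x<0. Q1 2 \<xi> x = Q \<xi> x) \<and> (\<forall>x>0. Q2 2 \<xi> x = Q \<xi> x)"
    using left_converged[of _ 0] right_converged[of _ 0] by (simp add: numeral_2_eq_2)
qed

end
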